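(* Fix $x_1\in\mathbb R^d$, $B\in\mathbb R^{d\times d}$ and $q\ge1$. Then $$\mathbb E_{-1}[p_{12}^q]\le\frac1{(n-1)^q}\exp\left(\frac{q^2}2x_1^\top B\Sigma B^\top x_1\right),$$ $$\mathbb E_{-1}[p_{11}^q]\le\frac1{(n-1)^q}\exp(qx_1^\top Bx_1)\exp\left(\frac{q^2}{2(n-1)}x_1^\top B\Sigma B^\top x_1\right).$$
   Context: $n\ge2$; $\Sigma\in\mathbb R^{d\times d}$ symmetric positive semidefinite; $x_2,\dots,x_n$ i.i.d. $\mathcal N(0,\Sigma)$ and $\mathbb E_{-1}$ denotes expectation over $x_2,\dots,x_n$ with $x_1$ held fixed. Softmax weights: $p_{1j}=\dfrac{\exp(x_1^\top Bx_j)}{\sum_{k=1}^n\exp(x_1^\top Bx_k)}$ for $j=1,\dots,n$. *)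

theory Defs
  imports "HOL-Probability.Probability"
begin

definition centered_gaussian :: "real \<Rightarrow> real measure" where
  "centered_gaussian v =
     (if v = 0 then return borel 0 else density lborel (normal_density 0 (sqrt v)))"

text \<open>A random vector X on M has law N(0, S) (Cramer--Wold definition): every linear
  functional u . X is a centered real Gaussian with variance u^T S u.\<close>
definition gaussian_vector ::
  "'a measure \<Rightarrow> ('a \<Rightarrow> real ^ 'd) \<Rightarrow> real ^ 'd ^ 'd \<Rightarrow> bool" where
  "gaussian_vector M X S \<longleftrightarrow>
     X \<in> borel_measurable M \<and>
     (\<forall>u. distr M borel (\<lambda>\<omega>. u \<bullet> X \<omega>) = centered_gaussian (u \<bullet> (S *v u)))"

text \<open>Softmax weights p_{1j} for the query x1, with random keys X 2, ..., X n
  (the key of index 1 is x1 itself).\<close>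
definition softmax_weight ::
  "real ^ 'd ^ 'd \<Rightarrow> real ^ 'd \<Rightarrow> (nat \<Rightarrow> real ^ 'd) \<Rightarrow> nat \<Rightarrow> nat \<Rightarrow> real" where
  "softmax_weight B x1 xs n j =
     exp (x1 \<bullet> (B *v xs j)) / (\<Sum>k\<in>{1..n}. exp (x1 \<bullet> (B *v xs k)))"

end

theory Submission
  imports Defs
begin

text \<open>Drop the deterministic term from the softmax denominator and bound the remaining
  n - 1 terms from below by convexity of exp: their sum is at least (n - 1) times the exponential
  of their mean. Then every p_1j^q is at most (n - 1)^-q times the exponential of a linear
  combination \<Sum> c_k u.x_k of the independent centred Gaussians u.x_k, where u = B^T x_1
  and each u.x_k has variance u^T \<Sigma> u, so the Gaussian moment generating function gives
  the bound exp(u^T \<Sigma> u / 2 * \<Sum> c_k^2). For p_12 the coefficients are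
  c_k = q (\<delta>_k2 - 1/(n - 1)) with \<Sum> c_k^2 \<le> q^2, for p_11 they are
  c_k = -q/(n - 1) with \<Sum> c_k^2 = q^2/(n - 1).\<close>

lemma normal_density_mult_exp:
  assumes "\<sigma> > 0"
  shows "normal_density 0 \<sigma> x * exp (c * x) = exp (c\<^sup>2 * \<sigma>\<^sup>2 / 2) * normal_density (c * \<sigma>\<^sup>2) \<sigma> x"
proof -
  have "- ((x - 0)\<^sup>2) / (2 * \<sigma>\<^sup>2) + c * x = c\<^sup>2 * \<sigma>\<^sup>2 / 2 + - ((x - c * \<sigma>\<^sup>2)\<^sup>2) / (2 * \<sigma>\<^sup>2)"
    using assms by (simp add: field_simps power2_eq_square)
  then show ?thesis
    unfolding normal_density_def by (simp add: exp_add[symmetric] mult_ac)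
qed

lemma centered_gaussian_exp_integral:
  assumes "0 \<le> v"
  shows "has_bochner_integral (centered_gaussian v) (\<lambda>x. exp (c * x)) (exp (c\<^sup>2 * v / 2))"
proof (cases "v = 0")
  case True
  have "integrable (return borel 0) (\<lambda>x::real. exp (c * x))"
    by (intro finite_measure.integrable_const_bound[where B = 1])
       (auto simp: AE_return prob_space.finite_measure prob_space_return)
  then show ?thesis
    using True by (simp add: has_bochner_integral_iff centered_gaussian_def integral_return)
next
  case False
  define \<sigma> where "\<sigma> = sqrt v"
  have \<sigma>: "\<sigma> > 0" "\<sigma>\<^sup>2 = v"
    using assms False by (auto simp: \<sigma>_def)
  have "has_bochner_integral lborel (normal_density (c * \<sigma>\<^sup>2) \<sigma>) 1"
    using integrable_normal_density[OF \<sigma>(1)] integral_normal_density[OF \<sigma>(1)]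
    by (simp add: has_bochner_integral_iff)
  then have "has_bochner_integral lborel
      (\<lambda>x. normal_density 0 \<sigma> x * exp (c * x)) (exp (c\<^sup>2 * v / 2))"
    using has_bochner_integral_mult_right[of "exp (c\<^sup>2 * v / 2)" lborel _ 1]
    by (simp add: normal_density_mult_exp[OF \<sigma>(1)] \<sigma>(2))
  then show ?thesis
    unfolding centered_gaussian_def if_not_P[OF False] \<sigma>_def[symmetric]
    by (intro has_bochner_integral_density) auto
qed

lemma gaussian_vector_exp_inner:
  assumes "gaussian_vector M X S" "0 \<le> u \<bullet> (S *v u)"
  shows "has_bochner_integral M (\<lambda>\<omega>. exp (c * (u \<bullet> X \<omega>)))
           (exp (c\<^sup>2 * (u \<bullet> (S *v u)) / 2))"
proof -
  have X: "X \<in> borel_measurable M"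
    and law: "distr M borel (\<lambda>\<omega>. u \<bullet> X \<omega>) = centered_gaussian (u \<bullet> (S *v u))"
    using assms(1) by (auto simp: gaussian_vector_def)
  have "(\<lambda>\<omega>. u \<bullet> X \<omega>) \<in> borel_measurable M"
    using X by measurable
  then show ?thesis
    using centered_gaussian_exp_integral[OF assms(2), of c]
    by (simp add: has_bochner_integral_iff integrable_distr_eq integral_distr flip: law)
qed

lemma indep_gaussian_vectors_exp_sum:
  assumes "prob_space M" "finite K" "prob_space.indep_vars M (\<lambda>_. borel) X K"
    and "\<forall>k\<in>K. gaussian_vector M (X k) S" "0 \<le> u \<bullet> (S *v u)"
  shows "has_bochner_integral M (\<lambda>\<omega>. exp (\<Sum>k\<in>K. c k * (u \<bullet> X k \<omega>)))
           (exp (u \<bullet> (S *v u) / 2 * (\<Sum>k\<in>K. (c k)\<^sup>2)))"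
proof -
  interpret prob_space M by fact
  have indep: "indep_vars (\<lambda>_. borel) (\<lambda>k \<omega>. exp (c k * (u \<bullet> X k \<omega>))) K"
    by (rule indep_vars_compose2[OF assms(3)]) simp
  have factor: "has_bochner_integral M (\<lambda>\<omega>. exp (c k * (u \<bullet> X k \<omega>)))
      (exp ((c k)\<^sup>2 * (u \<bullet> (S *v u)) / 2))" if "k \<in> K" for k
    using gaussian_vector_exp_inner assms(4,5) that by blast
  have "has_bochner_integral M (\<lambda>\<omega>. \<Prod>k\<in>K. exp (c k * (u \<bullet> X k \<omega>)))
      (\<Prod>k\<in>K. exp ((c k)\<^sup>2 * (u \<bullet> (S *v u)) / 2))"
    using indep_vars_integrable[OF assms(2) indep] indep_vars_lebesgue_integral[OF assms(2) indep]
      factor by (simp add: has_bochner_integral_iff)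
  moreover have "(\<Prod>k\<in>K. exp ((c k)\<^sup>2 * (u \<bullet> (S *v u)) / 2))
      = exp (u \<bullet> (S *v u) / 2 * (\<Sum>k\<in>K. (c k)\<^sup>2))"
    using assms(2) by (simp add: exp_sum[symmetric] sum_distrib_left mult_ac)
  ultimately show ?thesis
    using assms(2) by (simp add: exp_sum)
qed

lemma expectation_le_exp_indep_gaussian_sum:
  assumes "prob_space M" "finite K" "prob_space.indep_vars M (\<lambda>_. borel) X K"
    and "\<forall>k\<in>K. gaussian_vector M (X k) S" "0 \<le> u \<bullet> (S *v u)"
    and "\<And>\<omega>. \<omega> \<in> space M \<Longrightarrow> f \<omega> \<le> C * exp (\<Sum>k\<in>K. c k * (u \<bullet> X k \<omega>))" "0 \<le> C"
  shows "prob_space.expectation M f \<le> C * exp (u \<bullet> (S *v u) / 2 * (\<Sum>k\<in>K. (c k)\<^sup>2))"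
proof (cases "integrable M f")
  case True
  note mgf = indep_gaussian_vectors_exp_sum[OF assms(1-5), of c]
  have "integral\<^sup>L M f \<le> integral\<^sup>L M (\<lambda>\<omega>. C * exp (\<Sum>k\<in>K. c k * (u \<bullet> X k \<omega>)))"
    using True mgf assms(6) by (intro integral_mono) (auto simp: has_bochner_integral_iff)
  with mgf show ?thesis
    by (simp add: has_bochner_integral_iff)
next
  case False
  \<comment> \<open>no integrability hypothesis is needed: a non-integrable f has expectation 0\<close>
  then show ?thesis
    using assms(7) by (simp add: not_integrable_integral_eq)
qed

lemma card_mult_exp_mean_le_sum_exp:
  fixes y :: "'k \<Rightarrow> real"
  assumes "finite K" "K \<noteq> {}"
  shows "card K * exp ((\<Sum>k\<in>K. y k) / card K) \<le> (\<Sum>k\<in>K. exp (y k))"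
proof -
  have m: "real (card K) > 0"
    using assms by (simp add: card_gt_0_iff)
  have "exp (\<Sum>k\<in>K. (1 / card K) *\<^sub>R y k) \<le> (\<Sum>k\<in>K. (1 / card K) * exp (y k))"
    using m by (intro convex_on_sum[OF assms exp_convex]) auto
  then show ?thesis
    using m by (simp add: field_simps flip: sum_distrib_left sum_divide_distrib)
qed

lemma exp_div_add_sum_exp_powr_le:
  fixes y :: "'k \<Rightarrow> real"
  assumes "finite K" "K \<noteq> {}" "0 \<le> z" "0 \<le> q"
  shows "(exp t / (z + (\<Sum>k\<in>K. exp (y k)))) powr q
           \<le> exp (q * t - q / card K * (\<Sum>k\<in>K. y k)) / card K powr q"
proof -
  define m where "m = real (card K)"
  define ybar where "ybar = (\<Sum>k\<in>K. y k) / m"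
  have m: "m > 0"
    using assms by (simp add: m_def card_gt_0_iff)
  have mean: "m * exp ybar \<le> z + (\<Sum>k\<in>K. exp (y k))"
    using card_mult_exp_mean_le_sum_exp[OF assms(1,2), of y] assms(3)
    by (simp add: m_def ybar_def)
  moreover have "0 < m * exp ybar"
    using m by simp
  ultimately have denom_pos: "0 < z + (\<Sum>k\<in>K. exp (y k))"
    by linarith
  with mean m have "exp t / (z + (\<Sum>k\<in>K. exp (y k))) \<le> exp t / (m * exp ybar)"
    by (intro divide_left_mono mult_pos_pos) auto
  also have "\<dots> = exp (t - ybar) / m"
    by (simp add: exp_diff)
  finally have "(exp t / (z + (\<Sum>k\<in>K. exp (y k)))) powr q \<le> (exp (t - ybar) / m) powr q"
    using denom_pos assms(4) by (intro powr_mono2) auto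
  also have "\<dots> = exp (q * t - q / m * (\<Sum>k\<in>K. y k)) / m powr q"
    by (simp add: powr_divide exp_powr_real ybar_def algebra_simps)
  finally show ?thesis
    unfolding m_def .
qed

lemma softmax_weight_powr_le:
  assumes "2 \<le> n" "0 \<le> q"
  shows "softmax_weight B x (xs(1 := x)) n j powr q
           \<le> exp (q * (x \<bullet> (B *v (xs(1 := x)) j))
                   - q / (real n - 1) * (\<Sum>k=2..n. x \<bullet> (B *v xs k)))
             / (real n - 1) powr q"
proof -
  have "(\<Sum>k=1..n. exp (x \<bullet> (B *v (xs(1 := x)) k)))
      = exp (x \<bullet> (B *v x)) + (\<Sum>k=2..n. exp (x \<bullet> (B *v xs k)))"
    using assms(1) by (simp add: sum.atLeast_Suc_atMost numeral_2_eq_2)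
  moreover have "real (card {2..n}) = real n - 1"
    using assms(1) by simp
  ultimately show ?thesis
    unfolding softmax_weight_def
    using exp_div_add_sum_exp_powr_le[of "{2..n}" "exp (x \<bullet> (B *v x))" q] assms by simp
qed

lemma sum_square_indicator_minus_mean:
  fixes q :: real
  assumes "finite K" "j \<in> K"
  shows "(\<Sum>k\<in>K. (of_bool (k = j) * q - q / card K)\<^sup>2) = q\<^sup>2 - q\<^sup>2 / card K"
proof -
  have "card K > 0"
    using assms card_gt_0_iff by blast
  have "(\<Sum>k\<in>K. (of_bool (k = j) * q - q / card K)\<^sup>2)
      = (q - q / card K)\<^sup>2 + (card K - 1) * (q / card K)\<^sup>2"
    using assms by (simp add: sum.remove)
  also have "\<dots> = q\<^sup>2 - q\<^sup>2 / card K"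
    using \<open>card K > 0\<close> by (simp add: field_simps power2_eq_square)
  finally show ?thesis .
qed

lemma expectation_softmax_weight_key_powr_le:
  fixes X :: "nat \<Rightarrow> 'a \<Rightarrow> real ^ 'd"
  assumes "prob_space M" "2 \<le> n" "0 \<le> q" "j \<in> {2..n}"
    and "prob_space.indep_vars M (\<lambda>_. borel) X {2..n}"
    and "\<forall>k\<in>{2..n}. gaussian_vector M (X k) \<Sigma>"
    and "0 \<le> (transpose B *v x) \<bullet> (\<Sigma> *v (transpose B *v x))"
  shows "prob_space.expectation M (\<lambda>\<omega>. softmax_weight B x ((\<lambda>k. X k \<omega>)(1 := x)) n j powr q)
           \<le> 1 / (real n - 1) powr q
               * exp (q\<^sup>2 / 2 * ((transpose B *v x) \<bullet> (\<Sigma> *v (transpose B *v x))))"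
proof -
  interpret prob_space M by fact
  define u where "u = transpose B *v x"
  define m where "m = real n - 1"
  define c where "c k = of_bool (k = j) * q - q / m" for k :: nat
  have var: "0 \<le> u \<bullet> (\<Sigma> *v u)"
    using assms(7) by (simp add: u_def)
  have "expectation (\<lambda>\<omega>. softmax_weight B x ((\<lambda>k. X k \<omega>)(1 := x)) n j powr q)
      \<le> 1 / m powr q * exp (u \<bullet> (\<Sigma> *v u) / 2 * (\<Sum>k\<in>{2..n}. (c k)\<^sup>2))"
  proof (rule expectation_le_exp_indep_gaussian_sum[OF assms(1) _ assms(5,6) var])
    fix \<omega>
    have "(\<Sum>k\<in>{2..n}. c k * (u \<bullet> X k \<omega>))
        = q * (u \<bullet> X j \<omega>) - q / m * (\<Sum>k=2..n. u \<bullet> X k \<omega>)"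
      using assms(4) by (simp add: c_def left_diff_distrib sum_subtractf mult.assoc
          flip: sum_distrib_left sum_divide_distrib)
    then show "softmax_weight B x ((\<lambda>k. X k \<omega>)(1 := x)) n j powr q
        \<le> 1 / m powr q * exp (\<Sum>k\<in>{2..n}. c k * (u \<bullet> X k \<omega>))"
      using softmax_weight_powr_le[OF assms(2,3), of B x "\<lambda>k. X k \<omega>" j] assms(4)
      by (simp add: u_def m_def dot_lmul_matrix)
  qed auto
  also have "\<dots> \<le> 1 / m powr q * exp (q\<^sup>2 / 2 * (u \<bullet> (\<Sigma> *v u)))"
  proof -
    have "(\<Sum>k\<in>{2..n}. (c k)\<^sup>2) \<le> q\<^sup>2"
      using sum_square_indicator_minus_mean[of "{2..n}" j q] assms(2,4)
      by (simp add: c_def m_def)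
    from mult_left_mono[OF this var] show ?thesis
      by (intro mult_left_mono) (simp_all add: mult_ac)
  qed
  finally show ?thesis
    unfolding u_def m_def .
qed

lemma expectation_softmax_weight_query_powr_le:
  fixes X :: "nat \<Rightarrow> 'a \<Rightarrow> real ^ 'd"
  assumes "prob_space M" "2 \<le> n" "0 \<le> q"
    and "prob_space.indep_vars M (\<lambda>_. borel) X {2..n}"
    and "\<forall>k\<in>{2..n}. gaussian_vector M (X k) \<Sigma>"
    and "0 \<le> (transpose B *v x) \<bullet> (\<Sigma> *v (transpose B *v x))"
  shows "prob_space.expectation M (\<lambda>\<omega>. softmax_weight B x ((\<lambda>k. X k \<omega>)(1 := x)) n 1 powr q)
           \<le> 1 / (real n - 1) powr q * exp (q * (x \<bullet> (B *v x)))
               * exp (q\<^sup>2 / (2 * (real n - 1))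
                      * ((transpose B *v x) \<bullet> (\<Sigma> *v (transpose B *v x))))"
proof -
  interpret prob_space M by fact
  define u where "u = transpose B *v x"
  define m where "m = real n - 1"
  have var: "0 \<le> u \<bullet> (\<Sigma> *v u)"
    using assms(6) by (simp add: u_def)
  have "expectation (\<lambda>\<omega>. softmax_weight B x ((\<lambda>k. X k \<omega>)(1 := x)) n 1 powr q)
      \<le> 1 / m powr q * exp (q * (x \<bullet> (B *v x)))
          * exp (u \<bullet> (\<Sigma> *v u) / 2 * (\<Sum>k\<in>{2..n}. (- q / m)\<^sup>2))"
  proof (rule expectation_le_exp_indep_gaussian_sum[OF assms(1) _ assms(4,5) var])
    fix \<omega>
    have "(\<Sum>k\<in>{2..n}. - q / m * (u \<bullet> X k \<omega>)) = - (q / m * (\<Sum>k=2..n. u \<bullet> X k \<omega>))"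
      by (simp add: sum_negf sum_distrib_left)
    then show "softmax_weight B x ((\<lambda>k. X k \<omega>)(1 := x)) n 1 powr q
        \<le> 1 / m powr q * exp (q * (x \<bullet> (B *v x))) * exp (\<Sum>k\<in>{2..n}. - q / m * (u \<bullet> X k \<omega>))"
      using softmax_weight_powr_le[OF assms(2,3), of B x "\<lambda>k. X k \<omega>" 1]
      by (simp add: u_def m_def dot_lmul_matrix exp_diff exp_minus field_simps)
  qed auto
  also have "u \<bullet> (\<Sigma> *v u) / 2 * (\<Sum>k\<in>{2..n}. (- q / m)\<^sup>2)
      = q\<^sup>2 / (2 * m) * (u \<bullet> (\<Sigma> *v u))"
    using assms(2) by (simp add: m_def power2_eq_square)
  finally show ?thesis
    unfolding u_def m_def .
qed

theorem lemma9:
  fixes M :: "'a measure" and X :: "nat \<Rightarrow> 'a \<Rightarrow> real ^ 'd"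
    and \<Sigma> B :: "real ^ 'd ^ 'd" and x1 :: "real ^ 'd" and n :: nat and q :: real
  assumes "prob_space M"
    and "n \<ge> 2"
    and "transpose \<Sigma> = \<Sigma>"
    and "\<forall>v. 0 \<le> v \<bullet> (\<Sigma> *v v)"
    and "prob_space.indep_vars M (\<lambda>_. borel) X {2..n}"
    and "\<forall>j\<in>{2..n}. gaussian_vector M (X j) \<Sigma>"
    and "q \<ge> 1"
  shows "(prob_space.expectation M
           (\<lambda>\<omega>. softmax_weight B x1 ((\<lambda>j. X j \<omega>)(1 := x1)) n 2 powr q)
         \<le> 1 / (real n - 1) powr q
             * exp (q\<^sup>2 / 2 * ((transpose B *v x1) \<bullet> (\<Sigma> *v (transpose B *v x1))))) \<and>
         (prob_space.expectation M
           (\<lambda>\<omega>. softmax_weight B x1 ((\<lambda>j. X j \<omega>)(1 := x1)) n 1 powr q)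
         \<le> 1 / (real n - 1) powr q * exp (q * (x1 \<bullet> (B *v x1)))
             * exp (q\<^sup>2 / (2 * (real n - 1))
                    * ((transpose B *v x1) \<bullet> (\<Sigma> *v (transpose B *v x1)))))"
proof -
  \<comment> \<open>only the quadratic form of \<Sigma> enters\<close>
  have "0 \<le> (transpose B *v x1) \<bullet> (\<Sigma> *v (transpose B *v x1))" "0 \<le> q"
    using assms(4,7) by auto
  with assms(1,2,5,6) show ?thesis
    using expectation_softmax_weight_key_powr_le[of M n q 2 X \<Sigma> B x1]
      expectation_softmax_weight_query_powr_le[of M n q X \<Sigma> B x1]
    by simp
qed

end
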